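(* For every $k\in\mathbb{Z}$, $$\partial_v\,\pi_k(z)=z\,\pi_k(z),\qquad \partial_q\,\pi_k(z)=z\,\pi_{k+1}(z),$$ where $\partial_v,\partial_q$ are the partial derivatives on $\mathbb{Q}[\tau,q,v]$ applied coefficientwise in $z$.
   Context: Let $\mathbb{L}_0\in\mathbb{Q}[\tau,q,v]((\Lambda^{-1}))$ be the Laurent series $$\mathbb{L}_0=K_0+\tau\sum_{n=0}^\infty\Bigl(\frac{\tau}{\Lambda}\Bigr)^n\sum_{k=0}^n(-1)^{n-k}{n\brack k}\frac{\log(K_0/\Lambda)^{n-k+1}}{(n-k+1)!}\Bigl(\frac{K_0}{\Lambda}\Bigr)^{-n},$$ where $K_0=\Lambda+v+q\Lambda^{-1}$, $\log(K_0/\Lambda)$ and $(K_0/\Lambda)^{-n}$ are expanded in powers of $\Lambda^{-1}$, and ${n\brack k}$ are the unsigned Stirling numbers of the first kind ($\sum_k{n\brack k}\tau^k=\prod_{j=0}^{n-1}(\tau+j)$). For $n\in\mathbb{Z}$ let $[n]!=\Gamma(\tau z+n+1)/\Gamma(\tau z+1)$, i.e. $[n]!=\prod_{j=1}^n(j+\tau z)$ for $n\ge0$ (with $1/[n]!$ expanded as a power series in $z$) and $1/[-m]!=\prod_{j=0}^{m-1}(\tau z-j)$ for $m>0$. Define $\pi_k(z)\in\mathbb{Q}[\tau,q,v]((z))$ by $$\sum_{n\in\mathbb{Z}}\frac{z^n}{[n]!}\mathbb{L}_0^n=\sum_{k\in\mathbb{Z}}\pi_k(z)\Lambda^k,$$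 where $\mathbb{L}_0^n$ for $n<0$ is the inverse power in the commutative ring $\mathbb{Q}[\tau,q,v]((\Lambda^{-1}))$. *)

theory Defs
  imports "HOL-Computational_Algebra.Computational_Algebra" "HOL-Combinatorics.Stirling"
begin

unbundle fps_syntax

text \<open>The coefficient ring Q[tau,q,v], realised as nested univariate polynomials:
  outermost variable v, middle variable q, innermost variable tau.\<close>
type_synonym R = "rat poly poly poly"

definition cR :: "rat \<Rightarrow> R" where "cR c = [:[:[:c:]:]:]"
definition varV :: R where "varV = [:0, 1:]"
definition varQ :: R where "varQ = [:[:0, 1:]:]"
definition varT :: R where "varT = [:[:[:0, 1:]:]:]"

definition dV :: "R \<Rightarrow> R" where "dV = pderiv"
definition dQ :: "R \<Rightarrow> R" where "dQ = map_poly pderiv"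

text \<open>Coefficientwise application of a map g (with g 0 = 0) to a Laurent series.\<close>
definition fls_cmap :: "(R \<Rightarrow> R) \<Rightarrow> R fls \<Rightarrow> R fls" where
  "fls_cmap g f = Abs_fls (\<lambda>m. g (f $$ m))"

text \<open>Power series in X = Lambda^-1.  PK = K0/Lambda = 1 + v X + q X^2.\<close>
definition PK :: "R fps" where
  "PK = 1 + fps_const varV * fps_X + fps_const varQ * fps_X ^ 2"

definition logPK :: "R fps" where
  "logPK = Abs_fps (\<lambda>m. cR (fps_ln (1::rat) $ m)) oo (PK - 1)"

definition PKinv :: "R fps" where
  "PKinv = fps_left_inverse PK 1"

text \<open>n-th summand (without the overall factor tau) of the series in the definition of L0.\<close>
definition Lterm :: "nat \<Rightarrow> R fps" where
  "Lterm n = fps_const (varT ^ n) * fps_X ^ n *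
     (\<Sum>k\<le>n. fps_const (of_int ((-1) ^ (n - k) * int (stirling n k)) * cR (1 / fact (n - k + 1)))
              * logPK ^ (n - k + 1)) * PKinv ^ n"

text \<open>The X-adically convergent sum over n: the n-th summand has order at least n,
  so the coefficient of X^m only receives contributions from n \<le> m.\<close>
definition Ltail :: "R fps" where
  "Ltail = Abs_fps (\<lambda>m. \<Sum>n\<le>m. Lterm n $ m)"

text \<open>L0 as a Laurent series in X = Lambda^-1 (fls_X_inv = Lambda).\<close>
definition L0 :: "R fls" where
  "L0 = fls_X_inv + fls_const varV + fls_const varQ * fls_X + fls_const varT * fps_to_fls Ltail"

text \<open>Integer powers of L0 (inverse taken in the ring of Laurent series; L0 has leading coefficient 1).\<close>
definition Lpow :: "int \<Rightarrow> R fls" where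
  "Lpow n = (if 0 \<le> n then L0 ^ nat n else fls_left_inverse L0 1 ^ nat (- n))"

definition recipfact :: "int \<Rightarrow> R fps" where
  "recipfact n = (if 0 \<le> n
     then fps_left_inverse (\<Prod>j\<in>{1..nat n}. fps_const (of_nat j) + fps_const varT * fps_X)
                           (cR (1 / fact (nat n)))
     else (\<Prod>j\<in>{0..<nat (- n)}. fps_const varT * fps_X - fps_const (of_nat j)))"

definition zterm :: "int \<Rightarrow> R fls" where
  "zterm n = fls_shift (- n) (fps_to_fls (recipfact n))"

text \<open>pi_k(z): coefficient of Lambda^k in sum_n z^n/[n]! L0^n.  The coefficient of Lambda^k
  of L0^n vanishes unless n \<ge> k, and z^n/[n]! has order \<ge> n, so the coefficient of z^m only
  receives contributions from k \<le> n \<le> m.\<close>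
definition piK :: "int \<Rightarrow> R fls" where
  "piK k = Abs_fls (\<lambda>m. \<Sum>n\<in>{k..m}. zterm n $$ m * Lpow n $$ (- k))"

end

(* Put K = K0/Lambda and write L0 = Lambda P with P a power series in X = Lambda^-1.  The double
   sum defining L0 is the substitution x := tau X/K, y := log K into a two-variable series Y built
   from Stirling numbers: P = K (1 + x Y).  The recurrence of the Stirling numbers says that Y
   solves (1 - x) Y_y + x^2 Y_x = 1, and uniqueness of solutions of this first order equation
   yields Y_y (1 + x Y - x) = 1 + x Y.  After substitution this becomes, for every derivation D of
   the coefficient ring that kills tau and the rationals,  D L0 * (L0 - tau) = D K0 * L0.  So
   u_n = L0^(n-1) D L0 satisfies u_(n+1) - tau u_n = D K0 * L0^n, while D (L0^n) = n u_n and
   (n + tau z) z^n/[n]! = z z^(n-1)/[n-1]!.  Summation by parts over n turns D pi_k into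
   z (D v * pi_k + D q * pi_(k+1)); the two claims are the cases D = d/dv and D = d/dq. *)

theory Submission
  imports Defs
begin

section \<open>Derivations acting coefficientwise on formal series\<close>

locale derivation =
  fixes d :: "'a::comm_ring_1 \<Rightarrow> 'a"
  assumes d_add: "d (x + y) = d x + d y"
      and d_mult: "d (x * y) = d x * y + x * d y"
begin

lemma d_0 [simp]: "d 0 = 0"
  using d_add[of 0 0] by simp

lemma d_1 [simp]: "d 1 = 0"
  using d_mult[of 1 1] by simp

lemma d_uminus: "d (- x) = - d x"
  using d_add[of x "- x"] by (simp add: eq_neg_iff_add_eq_0 add.commute)

lemma d_diff: "d (x - y) = d x - d y"
  using d_add[of x "- y"] by (simp add: d_uminus)

lemma d_sum: "d (sum f A) = (\<Sum>a\<in>A. d (f a))"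
  by (induction A rule: infinite_finite_induct) (auto simp: d_add)

lemma d_of_nat [simp]: "d (of_nat n) = 0"
  by (induction n) (simp_all add: d_add)

lemma d_power: "d (x ^ n) = of_nat n * x ^ (n - 1) * d x"
proof (induction n)
  case (Suc n)
  then show ?case
    by (cases n) (auto simp: d_mult algebra_simps)
qed simp

lemma d_inverse:
  assumes "y * x = 1"
  shows "d y = - (y * y * d x)"
proof -
  have "d y * x + y * d x = 0"
    using d_mult[of y x] assms by simp
  then have "(d y * x + y * d x) * y = 0"
    by simp
  then have "d y * (y * x) + y * y * d x = 0"
    by (simp add: algebra_simps)
  then show ?thesis
    using assms by (simp add: eq_neg_iff_add_eq_0)
qed

end

definition fps_cmap :: "('a \<Rightarrow> 'b) \<Rightarrow> 'a fps \<Rightarrow> 'b fps" where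
  "fps_cmap g f = Abs_fps (\<lambda>n. g (f $ n))"

lemma fps_cmap_nth [simp]: "fps_cmap g f $ n = g (f $ n)"
  by (simp add: fps_cmap_def)

definition fls_zero_below :: "'a::zero fls \<Rightarrow> int \<Rightarrow> bool" where
  "fls_zero_below f a \<longleftrightarrow> (\<forall>i<a. f $$ i = 0)"

lemma fls_zero_below_subdegree: "fls_zero_below f (fls_subdegree f)"
  by (simp add: fls_zero_below_def)

lemma fls_times_nth_bounded:
  fixes f g :: "'a::comm_ring_1 fls"
  assumes "fls_zero_below f a" "fls_zero_below g b"
  shows "(f * g) $$ n = (\<Sum>i=a..n - b. f $$ i * g $$ (n - i))"
proof (cases "f = 0 \<or> g = 0")
  case False
  then have a: "a \<le> fls_subdegree f" and b: "b \<le> fls_subdegree g"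
    using assms by (auto intro!: fls_subdegree_geI simp: fls_zero_below_def)
  have "(f * g) $$ n = (\<Sum>i=fls_subdegree f..n - fls_subdegree g. f $$ i * g $$ (n - i))"
    by (rule fls_times_nth(2))
  also have "\<dots> = (\<Sum>i=a..n - b. f $$ i * g $$ (n - i))"
    by (rule sum.mono_neutral_left) (use a b in \<open>auto simp: not_le\<close>)
  finally show ?thesis .
qed auto

lemma fls_zero_below_mult:
  fixes f g :: "'a::comm_ring_1 fls"
  assumes "fls_zero_below f a" "fls_zero_below g b"
  shows "fls_zero_below (f * g) (a + b)"
  using fls_times_nth_bounded[OF assms] by (simp add: fls_zero_below_def)

lemma fls_zero_below_power:
  fixes f :: "'a::comm_ring_1 fls"
  assumes "fls_zero_below f a"
  shows "fls_zero_below (f ^ n) (int n * a)"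
proof (induction n)
  case (Suc n)
  show ?case
    using fls_zero_below_mult[OF assms Suc] by (simp add: algebra_simps)
qed (simp add: fls_zero_below_def)

context derivation
begin

lemma fps_cmap_add: "fps_cmap d (f + g) = fps_cmap d f + fps_cmap d g"
  by (rule fps_ext) (simp add: d_add)

lemma fps_cmap_diff: "fps_cmap d (f - g) = fps_cmap d f - fps_cmap d g"
  by (rule fps_ext) (simp add: d_diff)

lemma fps_cmap_mult: "fps_cmap d (f * g) = fps_cmap d f * g + f * fps_cmap d g"
  by (rule fps_ext) (simp add: fps_mult_nth d_sum d_mult sum.distrib)

lemma fps_cmap_const [simp]: "fps_cmap d (fps_const c) = fps_const (d c)"
  by (rule fps_ext) simp

lemma fps_cmap_1 [simp]: "fps_cmap d 1 = 0"
  by (rule fps_ext) simp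

lemma fps_cmap_X [simp]: "fps_cmap d fps_X = 0"
  by (rule fps_ext) (simp add: fps_X_def)

lemma fps_cmap_prod_eq_0:
  "(\<And>i. i \<in> A \<Longrightarrow> fps_cmap d (f i) = 0) \<Longrightarrow> fps_cmap d (prod f A) = 0"
  by (induction A rule: infinite_finite_induct) (auto simp: fps_cmap_mult)

lemma derivation_fps_cmap: "derivation (fps_cmap d)"
  by unfold_locales (simp_all add: fps_cmap_add fps_cmap_mult)

end

section \<open>Sums of power series converging in the X-adic topology\<close>

definition fps_zero_below :: "'a::zero fps \<Rightarrow> nat \<Rightarrow> bool" where
  "fps_zero_below f a \<longleftrightarrow> (\<forall>i<a. f $ i = 0)"

lemma fps_zero_below_0 [simp]: "fps_zero_below f 0"
  by (simp add: fps_zero_below_def)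

lemma fps_zero_below_mult:
  fixes f g :: "'a::comm_ring_1 fps"
  assumes "fps_zero_below f a" "fps_zero_below g b"
  shows "fps_zero_below (f * g) (a + b)"
  unfolding fps_zero_below_def
proof (intro allI impI)
  fix i assume "i < a + b"
  then have "f $ k * g $ (i - k) = 0" if "k \<le> i" for k
    using assms that by (cases "k < a") (auto simp: fps_zero_below_def)
  then show "(f * g) $ i = 0"
    by (simp add: fps_mult_nth)
qed

lemma fps_zero_below_mult_left: "fps_zero_below g a \<Longrightarrow> fps_zero_below (f * g) a"
  for f g :: "'a::comm_ring_1 fps"
  using fps_zero_below_mult[of f 0 g a] by simp

lemma fps_zero_below_mult_right: "fps_zero_below f a \<Longrightarrow> fps_zero_below (f * g) a"
  for f g :: "'a::comm_ring_1 fps"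
  using fps_zero_below_mult[of f a g 0] by simp

lemma fps_zero_below_power:
  fixes f :: "'a::comm_ring_1 fps"
  assumes "fps_zero_below f a"
  shows "fps_zero_below (f ^ n) (n * a)"
proof (induction n)
  case (Suc n)
  show ?case
    using fps_zero_below_mult[OF assms Suc] by simp
qed simp

lemma fps_zero_below_power_nth0:
  fixes f :: "'a::comm_ring_1 fps"
  shows "f $ 0 = 0 \<Longrightarrow> fps_zero_below (f ^ n) n"
  using fps_zero_below_power[of f 1 n] by (simp add: fps_zero_below_def)

lemma fps_mult_nth_cong:
  assumes "\<And>i. i \<le> m \<Longrightarrow> g $ i = h $ i"
  shows "(f * g) $ m = (f * h) $ m"
  using assms by (auto simp: fps_mult_nth intro!: sum.cong)

definition Xadic_summable :: "(nat \<Rightarrow> 'a::zero fps) \<Rightarrow> bool" where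
  "Xadic_summable G \<longleftrightarrow> (\<forall>n. fps_zero_below (G n) n)"

definition Xadic_sum :: "(nat \<Rightarrow> 'a::comm_monoid_add fps) \<Rightarrow> 'a fps" where
  "Xadic_sum G = Abs_fps (\<lambda>m. (\<Sum>n\<le>m. G n) $ m)"

lemma Xadic_sum_nth: "Xadic_sum G $ m = (\<Sum>n\<le>m. G n) $ m"
  by (simp add: Xadic_sum_def)

lemma Xadic_sum_nth_partial_sum:
  fixes G :: "nat \<Rightarrow> 'a::comm_ring_1 fps"
  assumes "Xadic_summable G" "i \<le> m"
  shows "Xadic_sum G $ i = (\<Sum>n\<le>m. G n) $ i"
proof -
  have "(\<Sum>n\<le>m. G n) = (\<Sum>n\<le>i. G n) + (\<Sum>n\<in>{i<..m}. G n)"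
    using assms(2) by (subst sum.union_disjoint[symmetric]) (auto intro!: sum.cong)
  moreover have "(\<Sum>n\<in>{i<..m}. G n) $ i = 0"
    using assms(1) by (auto simp: fps_sum_nth Xadic_summable_def fps_zero_below_def)
  ultimately show ?thesis
    by (simp add: Xadic_sum_nth)
qed

lemma Xadic_sum_add: "Xadic_sum (\<lambda>n. G n + H n) = Xadic_sum G + Xadic_sum H"
  by (rule fps_ext) (simp add: Xadic_sum_nth sum.distrib)

lemma Xadic_sum_diff:
  fixes G H :: "nat \<Rightarrow> 'a::comm_ring_1 fps"
  shows "Xadic_sum (\<lambda>n. G n - H n) = Xadic_sum G - Xadic_sum H"
  by (rule fps_ext) (simp add: Xadic_sum_nth sum_subtractf)

lemma Xadic_sum_mult_left:
  fixes G :: "nat \<Rightarrow> 'a::comm_ring_1 fps"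
  assumes "Xadic_summable G"
  shows "f * Xadic_sum G = Xadic_sum (\<lambda>n. f * G n)"
proof (rule fps_ext)
  fix m
  have "(f * Xadic_sum G) $ m = (f * (\<Sum>n\<le>m. G n)) $ m"
    by (rule fps_mult_nth_cong) (rule Xadic_sum_nth_partial_sum[OF assms])
  then show "(f * Xadic_sum G) $ m = Xadic_sum (\<lambda>n. f * G n) $ m"
    by (simp add: Xadic_sum_nth sum_distrib_left)
qed

lemma Xadic_sum_mult:
  fixes G H :: "nat \<Rightarrow> 'a::comm_ring_1 fps"
  assumes "Xadic_summable G" "Xadic_summable H"
  shows "Xadic_sum G * Xadic_sum H = Xadic_sum (\<lambda>n. \<Sum>i\<le>n. G i * H (n - i))"
proof (rule fps_ext)
  fix m
  have nonzero: "i + j \<le> m" if "(G i * H j) $ m \<noteq> 0" for i j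
    using fps_zero_below_mult[of "G i" i "H j" j] assms that
    by (auto simp: Xadic_summable_def fps_zero_below_def not_le[symmetric])
  have "(Xadic_sum G * Xadic_sum H) $ m = ((\<Sum>i\<le>m. G i) * (\<Sum>j\<le>m. H j)) $ m"
    using fps_mult_nth_cong[of m "Xadic_sum H" "\<Sum>j\<le>m. H j"]
      fps_mult_nth_cong[of m "Xadic_sum G" "\<Sum>i\<le>m. G i" "\<Sum>j\<le>m. H j"]
      Xadic_sum_nth_partial_sum[OF assms(1)] Xadic_sum_nth_partial_sum[OF assms(2)]
    by (simp add: mult.commute)
  also have "\<dots> = (\<Sum>i\<le>m. \<Sum>j\<le>m. (G i * H j) $ m)"
    by (simp add: sum_distrib_left sum_distrib_right fps_sum_nth) (rule sum.swap)
  also have "\<dots> = (\<Sum>(i, j)\<in>{..m} \<times> {..m}. (G i * H j) $ m)"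
    by (rule sum.cartesian_product)
  also have "\<dots> = (\<Sum>(i, j)\<in>{(i, j). i + j \<le> m}. (G i * H j) $ m)"
    by (rule sum.mono_neutral_right) (auto dest: nonzero)
  also have "\<dots> = (\<Sum>n\<le>m. \<Sum>i\<le>n. (G i * H (n - i)) $ m)"
    by (rule sum.triangle_reindex_eq)
  finally show "(Xadic_sum G * Xadic_sum H) $ m = Xadic_sum (\<lambda>n. \<Sum>i\<le>n. G i * H (n - i)) $ m"
    by (simp add: Xadic_sum_nth fps_sum_nth)
qed

lemma Xadic_sum_shift:
  fixes G :: "nat \<Rightarrow> 'a::comm_ring_1 fps"
  assumes "G 0 = 0" "Xadic_summable G"
  shows "Xadic_sum G = Xadic_sum (\<lambda>n. G (Suc n))"
proof (rule fps_ext)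
  fix m
  have "Xadic_sum G $ m = (\<Sum>n\<le>Suc m. G n) $ m"
    by (rule Xadic_sum_nth_partial_sum[OF assms(2)]) simp
  also have "\<dots> = (\<Sum>n\<le>m. G (Suc n)) $ m"
    by (subst sum.atMost_Suc_shift) (simp add: assms(1))
  finally show "Xadic_sum G $ m = Xadic_sum (\<lambda>n. G (Suc n)) $ m"
    by (simp add: Xadic_sum_nth)
qed

definition series_at :: "'a::comm_ring_1 fps \<Rightarrow> (nat \<Rightarrow> 'a fps) \<Rightarrow> 'a fps" where
  "series_at T C = Xadic_sum (\<lambda>n. T ^ n * C n)"

lemma Xadic_summable_series_at:
  fixes T :: "'a::comm_ring_1 fps"
  shows "T $ 0 = 0 \<Longrightarrow> Xadic_summable (\<lambda>n. T ^ n * C n)"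
  unfolding Xadic_summable_def by (blast intro: fps_zero_below_mult_right fps_zero_below_power_nth0)

lemma fps_compose_eq_series_at: "a oo b = series_at b (\<lambda>n. fps_const (a $ n))"
  by (rule fps_ext)
    (simp add: series_at_def Xadic_sum_nth fps_compose_nth fps_sum_nth atLeast0AtMost mult.commute)

lemma series_at_add: "series_at T (\<lambda>n. C n + D n) = series_at T C + series_at T D"
  by (simp add: series_at_def distrib_left Xadic_sum_add)

lemma series_at_diff: "series_at T (\<lambda>n. C n - D n) = series_at T C - series_at T D"
  by (simp add: series_at_def right_diff_distrib Xadic_sum_diff)

lemma series_at_0 [simp]: "series_at T (\<lambda>n. 0) = 0"
  by (rule fps_ext) (simp add: series_at_def Xadic_sum_nth)

lemma series_at_mult_left:
  assumes "T $ 0 = 0"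
  shows "f * series_at T C = series_at T (\<lambda>n. f * C n)"
  unfolding series_at_def Xadic_sum_mult_left[OF Xadic_summable_series_at[OF assms]]
  by (simp add: algebra_simps)

lemma series_at_mult:
  assumes "T $ 0 = 0"
  shows "series_at T C * series_at T D = series_at T (\<lambda>n. \<Sum>i\<le>n. C i * D (n - i))"
proof -
  have "T ^ i * C i * (T ^ (n - i) * D (n - i)) = T ^ n * (C i * D (n - i))" if "i \<le> n" for i n
    using that by (simp add: mult_ac flip: power_add)
  then show ?thesis
    unfolding series_at_def
      Xadic_sum_mult[OF Xadic_summable_series_at[OF assms] Xadic_summable_series_at[OF assms]]
    by (simp add: sum_distrib_left)
qed

lemma series_at_const: "series_at T (\<lambda>n. if n = 0 then c else 0) = c"
  by (rule fps_ext) (simp add: series_at_def Xadic_sum_nth if_distrib cong: if_cong)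

lemma series_at_X:
  assumes "T $ 0 = 0"
  shows "series_at T (\<lambda>n. if n = 1 then 1 else 0) = T"
proof (rule fps_ext)
  fix m
  have "(\<Sum>n\<le>m. T ^ n * (if n = 1 then 1 else 0)) $ m = T $ m"
    using assms by (cases m) (simp_all add: if_distrib cong: if_cong)
  then show "series_at T (\<lambda>n. if n = 1 then 1 else 0) $ m = T $ m"
    by (simp add: series_at_def Xadic_sum_nth)
qed

context derivation
begin

lemma fps_cmap_Xadic_sum: "fps_cmap d (Xadic_sum G) = Xadic_sum (\<lambda>n. fps_cmap d (G n))"
  by (rule fps_ext) (simp add: Xadic_sum_nth fps_sum_nth d_sum)

text \<open>The terms \<open>n T\<^sup>n\<^sup>-\<^sup>1 d(T) C\<^sub>n\<close> are reindexed by \<open>n - 1\<close>.\<close>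

lemma fps_cmap_series_at:
  assumes T0: "T $ 0 = 0"
  shows "fps_cmap d (series_at T C)
    = fps_cmap d T * series_at T (\<lambda>n. of_nat (Suc n) * C (Suc n))
      + series_at T (\<lambda>n. fps_cmap d (C n))"
proof -
  define G where "G n = of_nat n * T ^ (n - 1) * fps_cmap d T * C n" for n
  have "fps_cmap d (series_at T C) = Xadic_sum G + series_at T (\<lambda>n. fps_cmap d (C n))"
    unfolding series_at_def fps_cmap_Xadic_sum G_def
    by (simp add: fps_cmap_mult derivation.d_power[OF derivation_fps_cmap] algebra_simps
        flip: Xadic_sum_add)
  also have "Xadic_sum G = Xadic_sum (\<lambda>n. G (Suc n))"
  proof (rule Xadic_sum_shift)
    have "fps_zero_below (T ^ n * fps_cmap d T) (Suc n)" for n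
      using fps_zero_below_mult[OF fps_zero_below_power_nth0[OF T0], of "fps_cmap d T" 1 n] T0
      by (simp add: fps_zero_below_def)
    then show "Xadic_summable G"
      unfolding Xadic_summable_def G_def
      by (metis (no_types) fps_zero_below_0 fps_zero_below_mult_left fps_zero_below_mult_right
          diff_Suc_1 mult.assoc not0_implies_Suc)
  qed (simp add: G_def)
  also have "Xadic_sum (\<lambda>n. G (Suc n)) = fps_cmap d T * series_at T (\<lambda>n. of_nat (Suc n) * C (Suc n))"
    unfolding series_at_def Xadic_sum_mult_left[OF Xadic_summable_series_at[OF T0]]
    by (simp add: G_def algebra_simps)
  finally show ?thesis .
qed

lemma fps_cmap_compose:
  assumes "\<And>n. d (a $ n) = 0" "b $ 0 = 0"
  shows "fps_cmap d (a oo b) = fps_cmap d b * (fps_deriv a oo b)"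
proof -
  have "series_at b (\<lambda>n. of_nat (Suc n) * fps_const (a $ Suc n)) = fps_deriv a oo b"
    by (simp add: fps_compose_eq_series_at fps_of_nat[symmetric] del: of_nat_Suc)
  then show ?thesis
    using assms by (simp add: fps_compose_eq_series_at[of a] fps_cmap_series_at)
qed

end

section \<open>The Stirling series and its differential equation\<close>

lemma cR_0 [simp]: "cR 0 = 0"
  by (simp add: cR_def)

lemma cR_1 [simp]: "cR 1 = 1"
  by (simp add: cR_def one_pCons)

lemma cR_add: "cR (a + b) = cR a + cR b"
  by (simp add: cR_def)

lemma cR_uminus: "cR (- a) = - cR a"
  by (simp add: cR_def)

lemma cR_diff: "cR (a - b) = cR a - cR b"
  by (simp add: cR_def)

lemma cR_mult: "cR (a * b) = cR a * cR b"
  by (simp add: cR_def)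

lemma cR_of_nat: "cR (of_nat n) = of_nat n"
  by (simp add: cR_def of_nat_poly)

lemma cR_of_int: "cR (of_int n) = of_int n"
  by (simp add: cR_def of_int_poly)

interpretation fps_deriv: derivation "fps_deriv :: 'a::comm_ring_1 fps \<Rightarrow> 'a fps"
  by unfold_locales (simp_all add: algebra_simps)

definition stirling_coeff :: "nat \<Rightarrow> nat \<Rightarrow> rat" where
  "stirling_coeff N j = (if 1 \<le> j \<and> j \<le> N + 1
     then (-1) ^ (j - 1) * of_nat (stirling N (N + 1 - j)) / fact j else 0)"

lemma stirling_coeff_rec:
  "of_nat (Suc j) * stirling_coeff (Suc M) (Suc j)
     = of_nat (Suc j) * stirling_coeff M (Suc j) - of_nat M * stirling_coeff M j"
proof -
  have fact_Suc: "(fact (Suc j) :: rat) = of_nat (Suc j) * fact j"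
    by simp
  consider "j = 0" | "1 \<le> j \<and> j \<le> M" | "j = M + 1" | "j > M + 1"
    by linarith
  then show ?thesis
  proof cases
    case 2
    have "Suc M - j = Suc (M - j)"
      using 2 by (simp add: Suc_diff_le)
    then have st: "stirling (Suc M) (Suc M - j) = M * stirling M (Suc M - j) + stirling M (M - j)"
      using stirling.simps(4)[of M "M - j"] by simp
    have sign: "(-1::rat) ^ (j - 1) = - ((-1) ^ j)"
      using 2 by (cases j) auto
    have "of_nat (Suc j) * stirling_coeff (Suc M) (Suc j)
        = (-1) ^ j * of_nat (stirling (Suc M) (Suc M - j)) / fact j"
      using 2 by (simp add: stirling_coeff_def fact_Suc)
    moreover have "of_nat (Suc j) * stirling_coeff M (Suc j)
        = (-1) ^ j * of_nat (stirling M (M - j)) / fact j"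
      using 2 by (simp add: stirling_coeff_def fact_Suc Suc_diff_le)
    moreover have "of_nat M * stirling_coeff M j
        = - ((-1) ^ j * of_nat M * of_nat (stirling M (Suc M - j)) / fact j)"
      using 2 sign by (simp add: stirling_coeff_def)
    ultimately show ?thesis
      unfolding st by (simp add: algebra_simps add_divide_distrib)
  next
    case 3
    then show ?thesis
      by (cases M) (simp_all add: stirling_coeff_def)
  qed (simp_all add: stirling_coeff_def)
qed

text \<open>A series in \<^typ>\<open>R fps fps\<close> is read as a series in two variables: \<open>x\<close> (outer index)
  and \<open>y\<close> (inner index); \<^const>\<open>fps_deriv\<close> is \<open>\<partial>\<^sub>x\<close> and \<^term>\<open>fps_cmap fps_deriv\<close> is \<open>\<partial>\<^sub>y\<close>.
  The Stirling series is
  \<open>Y(x,y) = \<Sum>\<^sub>N x\<^sup>N \<Sum>\<^sub>k (-1)\<^sup>N\<^sup>-\<^sup>k [N,k] y\<^sup>N\<^sup>-\<^sup>k\<^sup>+\<^sup>1 / (N-k+1)!\<close>.\<close>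

definition stirling_series :: "R fps fps" where
  "stirling_series = Abs_fps (\<lambda>N. Abs_fps (\<lambda>j. cR (stirling_coeff N j)))"

lemma stirling_series_nth_nth [simp]: "stirling_series $ N $ j = cR (stirling_coeff N j)"
  by (simp add: stirling_series_def)

definition stirling_op :: "'a::comm_ring_1 fps fps \<Rightarrow> 'a fps fps" where
  "stirling_op F = (1 - fps_X) * fps_cmap fps_deriv F + fps_X ^ 2 * fps_deriv F"

lemma stirling_op_nth:
  "stirling_op F $ N = (if N = 0 then fps_deriv (F $ 0)
     else fps_deriv (F $ N) - fps_deriv (F $ (N - 1)) + of_nat (N - 1) * F $ (N - 1))"
proof -
  have "(fps_X ^ 2 * fps_deriv F) $ N = (if N = 0 then 0 else of_nat (N - 1) * F $ (N - 1))"
  proof -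
    consider "N = 0" | "N = 1" | M where "N = Suc (Suc M)"
      by (metis One_nat_def not0_implies_Suc)
    then show ?thesis
      by cases (simp_all add: fps_X_power_mult_nth del: of_nat_Suc)
  qed
  then show ?thesis
    by (simp add: stirling_op_def algebra_simps)
qed

lemma stirling_op_add: "stirling_op (F + G) = stirling_op F + stirling_op G"
  by (simp add: stirling_op_def fps_deriv.fps_cmap_add algebra_simps)

lemma stirling_op_diff: "stirling_op (F - G) = stirling_op F - stirling_op G"
  by (simp add: stirling_op_def fps_deriv.fps_cmap_diff algebra_simps)

lemma stirling_op_mult: "stirling_op (F * G) = stirling_op F * G + F * stirling_op G"
  by (simp add: stirling_op_def fps_deriv.fps_cmap_mult algebra_simps)

lemma stirling_op_1 [simp]: "stirling_op 1 = 0"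
  by (simp add: stirling_op_def)

lemma stirling_op_X [simp]: "stirling_op fps_X = fps_X ^ 2"
  by (simp add: stirling_op_def)

lemma stirling_op_stirling_series: "stirling_op stirling_series = 1"
proof (rule fps_ext)
  fix N
  show "stirling_op stirling_series $ N = 1 $ N"
  proof (cases N)
    case 0
    have "fps_deriv (stirling_series $ 0) = 1"
      by (rule fps_ext) (auto simp: stirling_coeff_def)
    then show ?thesis
      using 0 by (simp add: stirling_op_nth)
  next
    case (Suc M)
    have "fps_deriv (stirling_series $ Suc M) - fps_deriv (stirling_series $ M)
        + of_nat M * stirling_series $ M = 0"
    proof (rule fps_ext)
      fix j
      have "cR (of_nat (Suc j) * stirling_coeff (Suc M) (Suc j)
          - of_nat (Suc j) * stirling_coeff M (Suc j) + of_nat M * stirling_coeff M j) = 0"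
        by (subst stirling_coeff_rec) simp
      then show "(fps_deriv (stirling_series $ Suc M) - fps_deriv (stirling_series $ M)
          + of_nat M * stirling_series $ M) $ j = 0 $ j"
        by (simp add: cR_add cR_diff cR_mult cR_of_nat fps_of_nat[symmetric] del: of_nat_Suc)
    qed
    then show ?thesis
      using Suc by (simp add: stirling_op_nth)
  qed
qed

lemma fps_cmap_deriv_fps_deriv:
  "fps_cmap fps_deriv (fps_deriv F) = fps_deriv (fps_cmap fps_deriv F)"
  by (rule fps_ext) (simp add: fps_of_nat[symmetric] del: of_nat_Suc)

lemma stirling_op_dy_stirling_series: "stirling_op (fps_cmap fps_deriv stirling_series) = 0"
proof -
  have "stirling_op (fps_cmap fps_deriv stirling_series)
      = fps_cmap fps_deriv (stirling_op stirling_series)"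
    by (simp add: stirling_op_def fps_deriv.fps_cmap_mult fps_deriv.fps_cmap_add
        fps_deriv.fps_cmap_diff fps_cmap_deriv_fps_deriv power2_eq_square)
  then show ?thesis
    by (simp add: stirling_op_stirling_series)
qed

lemma stirling_op_eq_X_times_imp_0:
  fixes E :: "'a::{idom,ring_char_0} fps fps"
  assumes op: "stirling_op E = fps_X * E" and y0: "\<And>N. E $ N $ 0 = 0"
  shows "E = 0"
proof -
  have "E $ N = 0" for N
  proof (induction N rule: less_induct)
    case (less N)
    have "stirling_op E $ N = (fps_X * E) $ N"
      using op by simp
    then have "fps_deriv (E $ N) = 0"
      using less[of "N - 1"] by (cases N) (simp_all add: stirling_op_nth)
    then show "E $ N = 0"
      using y0[of N] by simp
  qed
  then show ?thesis
    by (intro fps_ext) simp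
qed

definition eval_y0 :: "'a::comm_ring_1 fps fps \<Rightarrow> 'a fps" where
  "eval_y0 F = fps_cmap (\<lambda>f. f $ 0) F"

lemma eval_y0_add: "eval_y0 (F + G) = eval_y0 F + eval_y0 G"
  by (rule fps_ext) (simp add: eval_y0_def)

lemma eval_y0_diff: "eval_y0 (F - G) = eval_y0 F - eval_y0 G"
  by (rule fps_ext) (simp add: eval_y0_def)

lemma eval_y0_mult: "eval_y0 (F * G) = eval_y0 F * eval_y0 G"
  by (rule fps_ext) (simp add: eval_y0_def fps_mult_nth fps_sum_nth)

lemma eval_y0_1 [simp]: "eval_y0 1 = 1"
  by (rule fps_ext) (simp add: eval_y0_def)

lemma eval_y0_X [simp]: "eval_y0 fps_X = fps_X"
  by (rule fps_ext) (simp add: eval_y0_def fps_X_def)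

text \<open>The identity \<open>Y\<^sub>y (1 + x Y - x) = 1 + x Y\<close>: both sides satisfy the same first order
  equation for \<^const>\<open>stirling_op\<close> and agree at \<open>y = 0\<close>.\<close>

lemma stirling_series_identity:
  "fps_cmap fps_deriv stirling_series * (1 + fps_X * stirling_series - fps_X)
     = 1 + fps_X * stirling_series"
proof -
  define Y where "Y = stirling_series"
  define Yy where "Yy = fps_cmap fps_deriv stirling_series"
  define E where "E = Yy * (1 + fps_X * Y - fps_X) - (1 + fps_X * Y)"
  have "stirling_op E = Yy * (fps_X ^ 2 * Y + fps_X - fps_X ^ 2) - (fps_X ^ 2 * Y + fps_X)"
    unfolding E_def Y_def Yy_def
    by (simp add: stirling_op_add stirling_op_diff stirling_op_mult stirling_op_stirling_series
        stirling_op_dy_stirling_series)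
  also have "\<dots> = fps_X * E"
    by (simp add: E_def algebra_simps power2_eq_square)
  finally have op: "stirling_op E = fps_X * E" .
  have geometric: "Abs_fps (\<lambda>_. 1 :: R) * (1 - fps_X) = 1"
  proof (rule fps_ext)
    show "(Abs_fps (\<lambda>_. 1 :: R) * (1 - fps_X)) $ n = 1 $ n" for n
      by (cases n) (simp_all add: algebra_simps)
  qed
  have "eval_y0 Y = 0" and "eval_y0 Yy = Abs_fps (\<lambda>_. 1)"
    by (auto intro!: fps_ext simp: eval_y0_def Y_def Yy_def stirling_coeff_def)
  then have "eval_y0 E = 0"
    unfolding E_def by (simp add: eval_y0_add eval_y0_diff eval_y0_mult geometric)
  then have "E $ N $ 0 = 0" for N
    by (metis eval_y0_def fps_cmap_nth fps_zero_nth)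
  then have "E = 0"
    by (rule stirling_op_eq_X_times_imp_0[OF op])
  then show ?thesis
    by (simp add: E_def Y_def Yy_def)
qed

section \<open>The series \<open>L\<^sub>0/\<Lambda>\<close> as a substitution into the Stirling series\<close>

lemma PK_nth_0 [simp]: "PK $ 0 = 1"
  by (simp add: PK_def)

lemma PKinv_mult_PK: "PKinv * PK = 1"
  unfolding PKinv_def by (rule fps_left_inverse) simp

lemma PK_mult_PKinv: "PK * PKinv = 1"
  using PKinv_mult_PK by (simp add: mult.commute)

definition ln1p_series :: "R fps" where
  "ln1p_series = Abs_fps (\<lambda>m. cR (fps_ln (1::rat) $ m))"

lemma logPK_eq: "logPK = ln1p_series oo (PK - 1)"
  by (simp add: logPK_def ln1p_series_def)

lemma logPK_nth_0 [simp]: "logPK $ 0 = 0"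
  by (simp add: logPK_eq ln1p_series_def fps_ln_nth)

lemma fps_deriv_ln1p_series_compose: "fps_deriv ln1p_series oo (PK - 1) = PKinv"
proof -
  have geometric: "(1 + fps_X) * Abs_fps (\<lambda>n. cR ((-1) ^ n)) = 1"
  proof (rule fps_ext)
    show "((1 + fps_X) * Abs_fps (\<lambda>n. cR ((-1) ^ n))) $ n = 1 $ n" for n
      by (cases n) (simp_all add: algebra_simps cR_uminus)
  qed
  have "fps_deriv ln1p_series = Abs_fps (\<lambda>n. cR ((-1) ^ n))"
  proof (rule fps_ext)
    have "of_nat (Suc n) * cR ((- 1) ^ n / of_nat (Suc n)) = cR ((-1) ^ n)" for n
      by (simp add: cR_of_nat[symmetric] flip: cR_mult del: of_nat_Suc)
    then show "fps_deriv ln1p_series $ n = Abs_fps (\<lambda>n. cR ((-1) ^ n)) $ n" for n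
      by (simp add: ln1p_series_def fps_ln_nth del: of_nat_Suc)
  qed
  have PK_minus_1: "(PK - 1) $ 0 = 0"
    by simp
  have "((1 + fps_X) oo (PK - 1)) * (fps_deriv ln1p_series oo (PK - 1)) = 1"
    unfolding \<open>fps_deriv ln1p_series = _\<close> using geometric
    by (metis fps_compose_1 fps_compose_mult_distrib[OF PK_minus_1])
  moreover have "(1 + fps_X) oo (PK - 1) = PK"
    by (simp add: fps_compose_add_distrib)
  ultimately have "PKinv * (PK * (fps_deriv ln1p_series oo (PK - 1))) = PKinv"
    by simp
  then show ?thesis
    by (simp add: PKinv_mult_PK flip: mult.assoc)
qed

text \<open>Substitution \<open>x := \<tau>\<Lambda>\<^sup>-\<^sup>1/K\<close>, \<open>y := log K\<close> into a two-variable series, where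
  \<open>K = K\<^sub>0/\<Lambda>\<close> is \<^const>\<open>PK\<close>.\<close>

definition x_subst :: "R fps" where
  "x_subst = fps_const varT * fps_X * PKinv"

lemma x_subst_nth_0 [simp]: "x_subst $ 0 = 0"
  by (simp add: x_subst_def mult.assoc)

definition subst_xy :: "R fps fps \<Rightarrow> R fps" where
  "subst_xy A = series_at x_subst (\<lambda>n. A $ n oo logPK)"

lemma subst_xy_add: "subst_xy (A + B) = subst_xy A + subst_xy B"
  by (simp add: subst_xy_def fps_compose_add_distrib series_at_add)

lemma subst_xy_diff: "subst_xy (A - B) = subst_xy A - subst_xy B"
  by (simp add: subst_xy_def fps_compose_sub_distrib series_at_diff)

lemma subst_xy_mult: "subst_xy (A * B) = subst_xy A * subst_xy B"
proof -
  have "(A * B) $ n oo logPK = (\<Sum>i\<le>n. (A $ i oo logPK) * (B $ (n - i) oo logPK))" for n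
    by (simp only: fps_mult_nth atLeast0AtMost fps_compose_sum_distrib
        fps_compose_mult_distrib[OF logPK_nth_0])
  then show ?thesis
    by (simp add: subst_xy_def series_at_mult)
qed

lemma subst_xy_1 [simp]: "subst_xy 1 = 1"
proof -
  have "(\<lambda>n. (1 :: R fps fps) $ n oo logPK) = (\<lambda>n. if n = 0 then 1 else 0)"
    by auto
  then show ?thesis
    by (simp add: subst_xy_def series_at_const)
qed

lemma subst_xy_X [simp]: "subst_xy fps_X = x_subst"
proof -
  have "(\<lambda>n. (fps_X :: R fps fps) $ n oo logPK) = (\<lambda>n. if n = 1 then 1 else 0)"
    by (auto simp: fps_X_def)
  then show ?thesis
    using series_at_X[OF x_subst_nth_0] by (simp add: subst_xy_def)
qed

lemma subst_xy_power: "subst_xy (A ^ n) = subst_xy A ^ n"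
  by (induction n) (simp_all add: subst_xy_mult)

lemma stirling_series_nth_eq_sum:
  "stirling_series $ n = (\<Sum>k\<le>n. fps_const (of_int ((-1) ^ (n - k) * int (stirling n k))
     * cR (1 / fact (n - k + 1))) * fps_X ^ (n - k + 1))"
proof (rule fps_ext)
  fix j
  define c where "c k = of_int ((-1) ^ (n - k) * int (stirling n k)) * cR (1 / fact (n - k + 1))" for k
  have "(\<Sum>k\<le>n. fps_const (c k) * fps_X ^ (n - k + 1)) $ j
      = (\<Sum>k\<le>n. if k = n + 1 - j then (if 1 \<le> j \<and> j \<le> n + 1 then c k else 0) else 0)"
    unfolding fps_sum_nth fps_mult_left_const_nth
    by (rule sum.cong) (auto simp: fps_X_power_iff)
  also have "\<dots> = (if 1 \<le> j \<and> j \<le> n + 1 then c (n + 1 - j) else 0)"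
    by (subst sum.delta) auto
  also have "\<dots> = cR (stirling_coeff n j)"
  proof (cases "1 \<le> j \<and> j \<le> n + 1")
    case True
    then have "n - (n + 1 - j) + 1 = j" "n - (n + 1 - j) = j - 1"
      by auto
    then have "c (n + 1 - j) = cR (of_int ((-1) ^ (j - 1) * int (stirling n (n + 1 - j)))) * cR (1 / fact j)"
      unfolding c_def by (simp only: cR_of_int)
    then show ?thesis
      using True by (simp add: stirling_coeff_def flip: cR_mult)
  qed (auto simp: stirling_coeff_def)
  finally show "stirling_series $ n $ j = (\<Sum>k\<le>n. fps_const (c k) * fps_X ^ (n - k + 1)) $ j"
    by simp
qed

lemma Lterm_eq: "Lterm n = x_subst ^ n * (stirling_series $ n oo logPK)"
proof -
  have X: "fps_X ^ m oo logPK = logPK ^ m" for m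
    by (simp add: fps_compose_power[OF logPK_nth_0, symmetric])
  have "stirling_series $ n oo logPK = (\<Sum>k\<le>n. fps_const (of_int ((-1) ^ (n - k) * int (stirling n k))
      * cR (1 / fact (n - k + 1))) * logPK ^ (n - k + 1))"
    unfolding stirling_series_nth_eq_sum fps_compose_sum_distrib
    by (rule sum.cong) (simp_all only: fps_compose_mult_distrib[OF logPK_nth_0] fps_const_compose X)
  then show ?thesis
    by (simp add: Lterm_def x_subst_def algebra_simps)
qed

lemma Ltail_eq_subst_xy: "Ltail = subst_xy stirling_series"
  by (rule fps_ext) (simp add: Ltail_def subst_xy_def series_at_def Xadic_sum_nth Lterm_eq fps_sum_nth)

definition L0_fps :: "R fps" where
  "L0_fps = PK + fps_const varT * fps_X * Ltail"

lemma x_subst_mult_PK: "x_subst * PK = fps_const varT * fps_X"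
  by (simp add: x_subst_def PKinv_mult_PK flip: mult.assoc)

lemma L0_fps_eq_subst_xy: "L0_fps = PK * subst_xy (1 + fps_X * stirling_series)"
  by (simp add: L0_fps_def subst_xy_add subst_xy_mult Ltail_eq_subst_xy flip: x_subst_mult_PK)
    (simp add: algebra_simps)

lemma L0_fps_minus_eq_subst_xy:
  "L0_fps - fps_const varT * fps_X = PK * subst_xy (1 + fps_X * stirling_series - fps_X)"
  by (simp add: L0_fps_def subst_xy_add subst_xy_diff subst_xy_mult Ltail_eq_subst_xy
      flip: x_subst_mult_PK)
    (simp add: algebra_simps)

section \<open>The key identity for a derivation of the coefficients\<close>

locale K0_derivation = derivation d for d :: "R \<Rightarrow> R" +
  fixes cv cq :: R
  assumes d_varT: "d varT = 0" and d_cR: "d (cR c) = 0"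
    and d_varV: "d varV = cv" and d_varQ: "d varQ = cq"
begin

lemma fps_cmap_PK: "fps_cmap d PK = fps_const cv * fps_X + fps_const cq * fps_X ^ 2"
  by (simp add: PK_def fps_cmap_add fps_cmap_mult d_varV d_varQ
      derivation.d_power[OF derivation_fps_cmap])

lemma fps_cmap_logPK: "fps_cmap d logPK = fps_cmap d PK * PKinv"
proof -
  have "fps_cmap d logPK = fps_cmap d (PK - 1) * (fps_deriv ln1p_series oo (PK - 1))"
    unfolding logPK_eq by (rule fps_cmap_compose) (simp_all add: ln1p_series_def d_cR)
  then show ?thesis
    by (simp add: fps_deriv_ln1p_series_compose fps_cmap_diff)
qed

lemma fps_cmap_x_subst: "fps_cmap d x_subst = - (x_subst * PKinv * fps_cmap d PK)"
proof -
  have "fps_cmap d PKinv = - (PKinv * PKinv * fps_cmap d PK)"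
    by (rule derivation.d_inverse[OF derivation_fps_cmap PKinv_mult_PK])
  then show ?thesis
    by (simp add: x_subst_def fps_cmap_mult d_varT algebra_simps)
qed

lemma fps_cmap_subst_xy:
  assumes "\<And>n j. d (A $ n $ j) = 0"
  shows "fps_cmap d (subst_xy A)
    = fps_cmap d x_subst * subst_xy (fps_deriv A) + fps_cmap d logPK * subst_xy (fps_cmap fps_deriv A)"
proof -
  have "fps_cmap d (subst_xy A)
      = fps_cmap d x_subst * series_at x_subst (\<lambda>n. of_nat (Suc n) * (A $ Suc n oo logPK))
        + series_at x_subst (\<lambda>n. fps_cmap d (A $ n oo logPK))"
    unfolding subst_xy_def by (rule fps_cmap_series_at[OF x_subst_nth_0])
  also have "series_at x_subst (\<lambda>n. of_nat (Suc n) * (A $ Suc n oo logPK)) = subst_xy (fps_deriv A)"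
    unfolding subst_xy_def
    by (simp add: fps_compose_mult_distrib[OF logPK_nth_0] fps_of_nat[symmetric] del: of_nat_Suc)
  also have "series_at x_subst (\<lambda>n. fps_cmap d (A $ n oo logPK))
      = series_at x_subst (\<lambda>n. fps_cmap d logPK * (fps_deriv (A $ n) oo logPK))"
    using assms by (simp add: fps_cmap_compose)
  also have "\<dots> = fps_cmap d logPK * subst_xy (fps_cmap fps_deriv A)"
    unfolding subst_xy_def by (simp add: series_at_mult_left[OF x_subst_nth_0])
  finally show ?thesis .
qed

lemma fps_cmap_L0_fps:
  "fps_cmap d L0_fps = fps_cmap d PK * subst_xy (fps_cmap fps_deriv stirling_series)"
proof -
  let ?Yx = "fps_deriv stirling_series" and ?Yy = "fps_cmap fps_deriv stirling_series"
  have "fps_cmap d Ltail = fps_cmap d PK * PKinv * (subst_xy ?Yy - x_subst * subst_xy ?Yx)"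
    unfolding Ltail_eq_subst_xy
    by (simp add: fps_cmap_subst_xy d_cR fps_cmap_x_subst fps_cmap_logPK algebra_simps)
  then have "fps_cmap d L0_fps
      = fps_cmap d PK + x_subst * PK * (fps_cmap d PK * PKinv * (subst_xy ?Yy - x_subst * subst_xy ?Yx))"
    by (simp add: L0_fps_def fps_cmap_add fps_cmap_mult d_varT x_subst_mult_PK)
  also have "\<dots> = fps_cmap d PK
      + fps_cmap d PK * (x_subst * (subst_xy ?Yy - x_subst * subst_xy ?Yx)) * (PKinv * PK)"
    by (simp only: mult_ac)
  also have "\<dots> = fps_cmap d PK * (1 + x_subst * subst_xy ?Yy - x_subst ^ 2 * subst_xy ?Yx)"
    by (simp add: PKinv_mult_PK PK_mult_PKinv algebra_simps power2_eq_square)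
  also have "1 + x_subst * subst_xy ?Yy - x_subst ^ 2 * subst_xy ?Yx
      = subst_xy (1 + fps_X * ?Yy - fps_X ^ 2 * ?Yx)"
    by (simp add: subst_xy_add subst_xy_diff subst_xy_mult subst_xy_power)
  also have "1 + fps_X * ?Yy - fps_X ^ 2 * ?Yx = ?Yy"
    using stirling_op_stirling_series by (simp add: stirling_op_def algebra_simps)
  finally show ?thesis .
qed

lemma fps_cmap_L0_fps_mult:
  "fps_cmap d L0_fps * (L0_fps - fps_const varT * fps_X) = fps_cmap d PK * L0_fps"
proof -
  let ?Y = stirling_series
  have "fps_cmap d L0_fps * (L0_fps - fps_const varT * fps_X)
      = fps_cmap d PK * PK * (subst_xy (fps_cmap fps_deriv ?Y) * subst_xy (1 + fps_X * ?Y - fps_X))"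
    unfolding fps_cmap_L0_fps L0_fps_minus_eq_subst_xy by (simp only: mult_ac)
  also have "\<dots> = fps_cmap d PK * PK * subst_xy (1 + fps_X * ?Y)"
    by (simp only: stirling_series_identity flip: subst_xy_mult)
  finally show ?thesis
    by (simp only: L0_fps_eq_subst_xy mult.assoc)
qed

end

section \<open>Integer powers of \<open>L\<^sub>0\<close>\<close>

lemma fls_X_inv_times_X: "fls_X_inv * fls_X = (1 :: 'a::comm_ring_1 fls)"
  by (rule fls_eqI) (simp add: fls_X_inv_times_conv_shift)

lemma L0_fps_nth_0 [simp]: "L0_fps $ 0 = 1"
  by (simp add: L0_fps_def mult.assoc)

lemma L0_eq: "L0 = fls_X_inv * fps_to_fls L0_fps"
proof -
  have "fps_to_fls L0_fps = 1 + fls_const varV * fls_X + fls_const varQ * fls_X ^ 2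
      + fls_const varT * fls_X * fps_to_fls Ltail"
    by (simp add: L0_fps_def PK_def fls_times_fps_to_fls fps_to_fls_power)
  then have "fls_X_inv * fps_to_fls L0_fps = fls_X_inv + fls_const varV * (fls_X_inv * fls_X)
      + fls_const varQ * fls_X * (fls_X_inv * fls_X)
      + fls_const varT * (fls_X_inv * fls_X) * fps_to_fls Ltail"
    by (simp add: algebra_simps power2_eq_square)
  then show ?thesis
    by (simp add: fls_X_inv_times_X L0_def)
qed

lemma L0_nth: "L0 $$ n = (if n < -1 then 0 else L0_fps $ nat (n + 1))"
  by (simp add: L0_eq fls_X_inv_times_conv_shift)

lemma fls_subdegree_L0: "fls_subdegree L0 = -1"
  by (rule fls_subdegree_eqI) (simp_all add: L0_nth)

definition L0_inv :: "R fls" where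
  "L0_inv = fls_left_inverse L0 1"

lemma L0_inv_mult_L0: "L0_inv * L0 = 1"
  unfolding L0_inv_def by (rule fls_left_inverse) (simp add: fls_subdegree_L0 L0_nth)

lemma Lpow_eq: "Lpow n = (if 0 \<le> n then L0 ^ nat n else L0_inv ^ nat (- n))"
  unfolding Lpow_def L0_inv_def ..

lemma Lpow_diff_1_mult_L0: "Lpow (n - 1) * L0 = Lpow n"
proof (cases "n \<ge> 1")
  case True
  then have "nat n = Suc (nat (n - 1))"
    by simp
  then show ?thesis
    using True by (simp add: Lpow_eq mult.commute)
next
  case False
  then have "nat (- (n - 1)) = Suc (nat (- n))"
    by simp
  then have "Lpow (n - 1) * L0 = L0_inv ^ nat (- n) * (L0_inv * L0)"
    using False by (simp add: Lpow_eq algebra_simps)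
  also have "\<dots> = Lpow n"
    using False by (cases "n = 0") (simp_all add: Lpow_eq L0_inv_mult_L0)
  finally show ?thesis .
qed

lemma fls_zero_below_Lpow: "fls_zero_below (Lpow n) (- n)"
proof -
  have "fls_zero_below L0 (-1)"
    by (simp add: fls_zero_below_def L0_nth)
  moreover have "fls_zero_below L0_inv 1"
    using fls_lr_inverse_subdegree(1)[of 1 L0] fls_zero_below_subdegree[of L0_inv]
    by (simp add: L0_inv_def fls_subdegree_L0)
  ultimately show ?thesis
    using fls_zero_below_power[of L0 "-1" "nat n"] fls_zero_below_power[of L0_inv 1 "nat (- n)"]
    by (cases "0 \<le> n") (simp_all add: Lpow_eq)
qed

context K0_derivation
begin

lemma fls_cmap_nth [simp]: "fls_cmap d f $$ n = d (f $$ n)"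
  unfolding fls_cmap_def
  by (rule nth_Abs_fls_lower_bound[where N = "fls_subdegree f"]) simp

lemma fls_zero_below_cmap: "fls_zero_below f a \<Longrightarrow> fls_zero_below (fls_cmap d f) a"
  by (simp add: fls_zero_below_def)

lemma fls_cmap_add: "fls_cmap d (f + g) = fls_cmap d f + fls_cmap d g"
  by (rule fls_eqI) (simp add: d_add)

lemma fls_cmap_mult: "fls_cmap d (f * g) = fls_cmap d f * g + f * fls_cmap d g"
proof (rule fls_eqI)
  fix n
  have f: "fls_zero_below f (fls_subdegree f)" and g: "fls_zero_below g (fls_subdegree g)"
    by (rule fls_zero_below_subdegree)+
  note df = fls_zero_below_cmap[OF f] and dg = fls_zero_below_cmap[OF g]
  show "fls_cmap d (f * g) $$ n = (fls_cmap d f * g + f * fls_cmap d g) $$ n"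
    by (simp add: fls_times_nth_bounded[OF f g] fls_times_nth_bounded[OF df g]
        fls_times_nth_bounded[OF f dg] d_sum d_mult sum.distrib)
qed

lemma derivation_fls_cmap: "derivation (fls_cmap d)"
  by unfold_locales (simp_all add: fls_cmap_add fls_cmap_mult)

lemma fls_cmap_L0_eq: "fls_cmap d L0 = fls_X_inv * fps_to_fls (fps_cmap d L0_fps)"
  unfolding L0_eq by (rule fls_eqI) (simp add: fls_X_inv_times_conv_shift)

lemma fls_zero_below_cmap_L0: "fls_zero_below (fls_cmap d L0) 0"
  unfolding fls_zero_below_def
  by (auto simp: fls_cmap_L0_eq fls_X_inv_times_conv_shift dest: le_neq_trans)

text \<open>In terms of \<open>\<Lambda>\<close>: \<open>\<partial>L\<^sub>0 \<cdot> (L\<^sub>0 - \<tau>) = \<partial>K\<^sub>0 \<cdot> L\<^sub>0\<close>.\<close>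

lemma fls_cmap_L0_mult:
  "fls_cmap d L0 * (L0 - fls_const varT) = (fls_const cv + fls_const cq * fls_X) * L0"
proof -
  have key: "fps_to_fls (fps_cmap d L0_fps) * fps_to_fls (L0_fps - fps_const varT * fps_X)
      = fps_to_fls (fps_cmap d PK) * fps_to_fls L0_fps"
    using arg_cong[OF fps_cmap_L0_fps_mult, of fps_to_fls] by (simp only: fls_times_fps_to_fls)
  have minus: "L0 - fls_const varT = fls_X_inv * fps_to_fls (L0_fps - fps_const varT * fps_X)"
    by (simp add: L0_eq fls_times_fps_to_fls algebra_simps flip: fls_X_inv_times_X)
  have dPK: "fps_to_fls (fps_cmap d PK) = fls_X * (fls_const cv + fls_const cq * fls_X)"
    by (simp add: fps_cmap_PK fls_times_fps_to_fls fps_to_fls_power power2_eq_square algebra_simps)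
  have "fls_cmap d L0 * (L0 - fls_const varT)
      = fls_X_inv * fls_X_inv * (fps_to_fls (fps_cmap d L0_fps) * fps_to_fls (L0_fps - fps_const varT * fps_X))"
    unfolding fls_cmap_L0_eq minus by (simp only: mult_ac)
  also have "\<dots> = (fls_X_inv * fls_X) * (fls_const cv + fls_const cq * fls_X) * (fls_X_inv * fps_to_fls L0_fps)"
    unfolding key dPK by (simp only: mult_ac)
  finally show ?thesis
    by (simp only: fls_X_inv_times_X L0_eq mult_1_left)
qed

lemma fls_cmap_Lpow: "fls_cmap d (Lpow n) = of_int n * Lpow (n - 1) * fls_cmap d L0"
proof (cases "n \<ge> 0")
  case True
  then show ?thesis
  proof (cases "n = 0")
    case False
    then have "nat n - 1 = nat (n - 1)" "of_nat (nat n) = (of_int n :: R fls)"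
      using True by auto
    then show ?thesis
      using True False derivation.d_power[OF derivation_fls_cmap, of L0 "nat n"]
      by (simp add: Lpow_eq)
  qed (rule fls_eqI, simp add: Lpow_eq)
next
  case False
  define m where "m = nat (- n)"
  then obtain m' where m': "m = Suc m'"
    using False by (metis gr0_implies_Suc zero_less_nat_eq neg_0_less_iff_less not_le)
  have "fls_cmap d (Lpow n) = of_nat m * L0_inv ^ (m - 1) * fls_cmap d L0_inv"
    using False derivation.d_power[OF derivation_fls_cmap] by (simp add: Lpow_eq m_def)
  also have "fls_cmap d L0_inv = - (L0_inv * L0_inv * fls_cmap d L0)"
    by (rule derivation.d_inverse[OF derivation_fls_cmap L0_inv_mult_L0])
  also have "of_nat m * L0_inv ^ (m - 1) * - (L0_inv * L0_inv * fls_cmap d L0)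
      = - of_nat m * L0_inv ^ Suc m * fls_cmap d L0"
    by (simp add: m' algebra_simps)
  also have "L0_inv ^ Suc m = Lpow (n - 1)"
    using False by (simp add: Lpow_eq m_def Suc_nat_eq_nat_zadd1)
  also have "- (of_nat m :: R fls) = of_int n"
    using False by (simp add: m_def)
  finally show ?thesis .
qed

end

section \<open>The coefficients of \<open>z\<^sup>n/[n]!\<close>\<close>

definition tau_fact :: "nat \<Rightarrow> R fps" where
  "tau_fact m = (\<Prod>j\<in>{1..m}. fps_const (of_nat j) + fps_const varT * fps_X)"

lemma tau_fact_Suc:
  "tau_fact (Suc m) = tau_fact m * (fps_const (of_nat (Suc m)) + fps_const varT * fps_X)"
  by (simp add: tau_fact_def)

lemma tau_fact_nth_0: "tau_fact m $ 0 = of_nat (fact m)"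
  by (induction m) (simp_all add: tau_fact_Suc tau_fact_def algebra_simps)

lemma recipfact_mult_tau_fact: "0 \<le> n \<Longrightarrow> recipfact n * tau_fact (nat n) = 1"
proof -
  assume "0 \<le> n"
  have "cR (1 / fact (nat n)) * tau_fact (nat n) $ 0 = cR (1 / fact (nat n) * of_nat (fact (nat n)))"
    by (simp only: tau_fact_nth_0 cR_of_nat[symmetric] cR_mult)
  then have "cR (1 / fact (nat n)) * tau_fact (nat n) $ 0 = 1"
    by simp
  then show ?thesis
    using \<open>0 \<le> n\<close> by (simp add: recipfact_def tau_fact_def fps_left_inverse)
qed

lemma recipfact_neg:
  "n < 0 \<Longrightarrow> recipfact n = (\<Prod>j\<in>{0..<nat (- n)}. fps_const varT * fps_X - fps_const (of_nat j))"
  by (simp add: recipfact_def)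

lemma recipfact_mult_linear:
  "recipfact n * (fps_const (of_int n) + fps_const varT * fps_X) = recipfact (n - 1)"
proof -
  consider "n \<ge> 1" | "n = 0" | "n < 0"
    by linarith
  then show ?thesis
  proof cases
    case 1
    then have m: "nat n = Suc (nat (n - 1))" "of_int n = (of_nat (Suc (nat (n - 1))) :: R)"
      by auto
    have "recipfact n * (fps_const (of_int n) + fps_const varT * fps_X)
        = recipfact n * (fps_const (of_int n) + fps_const varT * fps_X)
          * (tau_fact (nat (n - 1)) * recipfact (n - 1))"
      using recipfact_mult_tau_fact[of "n - 1"] 1 by (simp add: mult.commute)
    also have "\<dots> = recipfact n * tau_fact (nat n) * recipfact (n - 1)"
      by (simp only: m tau_fact_Suc mult_ac)
    finally show ?thesis
      using recipfact_mult_tau_fact[of n] 1 by simp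
  next
    case 2
    have "recipfact 0 = 1"
      using recipfact_mult_tau_fact[of 0] by (simp add: tau_fact_def)
    then show ?thesis
      using 2 by (simp add: recipfact_neg)
  next
    case 3
    then have "nat (- (n - 1)) = Suc (nat (- n))" "of_int n = - (of_nat (nat (- n)) :: R)"
      by auto
    then show ?thesis
      using 3 by (simp add: recipfact_neg prod.atLeast0_lessThan_Suc algebra_simps flip: fps_const_neg)
  qed
qed

definition zcoeff :: "int \<Rightarrow> int \<Rightarrow> R" where
  "zcoeff n m = zterm n $$ m"

lemma zcoeff_eq: "zcoeff n m = (if m < n then 0 else recipfact n $ nat (m - n))"
  by (simp add: zcoeff_def zterm_def)

lemma zcoeff_eq_0: "m < n \<Longrightarrow> zcoeff n m = 0"
  by (simp add: zcoeff_eq)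

lemma zcoeff_rec: "of_int n * zcoeff n m = zcoeff (n - 1) (m - 1) - varT * zcoeff n (m - 1)"
proof (cases "m < n")
  case False
  define j where "j = nat (m - n)"
  have "recipfact (n - 1) $ j
      = of_int n * recipfact n $ j + varT * (if j = 0 then 0 else recipfact n $ (j - 1))"
    by (simp flip: recipfact_mult_linear add: distrib_left mult.commute[of "recipfact n"]
        mult.assoc)
  moreover have "nat (m - 1 - n) = j - 1"
    unfolding j_def by (simp add: nat_diff_distrib')
  then have "zcoeff n (m - 1) = (if j = 0 then 0 else recipfact n $ (j - 1))"
    using False by (auto simp: zcoeff_eq j_def)
  ultimately show ?thesis
    using False by (simp add: zcoeff_eq j_def)
qed (simp add: zcoeff_eq)

definition Lcoeff :: "int \<Rightarrow> int \<Rightarrow> R" where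
  "Lcoeff n k = Lpow n $$ (- k)"

lemma piK_nth: "piK k $$ m = (\<Sum>n\<in>{k..m}. zcoeff n m * Lcoeff n k)"
  unfolding piK_def zcoeff_def Lcoeff_def
  by (rule nth_Abs_fls_lower_bound[where N = k]) simp

lemma Lcoeff_eq_0: "n < k \<Longrightarrow> Lcoeff n k = 0"
  using fls_zero_below_Lpow[of n] by (simp add: Lcoeff_def fls_zero_below_def)

section \<open>Summation by parts\<close>

text \<open>Abstract form of the computation of \<open>\<partial>\<pi>\<^sub>k\<close>: \<open>a\<close> stands for the coefficients of
  \<open>z\<^sup>n/[n]!\<close>, \<open>c\<close> for those of \<open>L\<^sub>0\<^sup>n\<close> and \<open>u\<close> for those of \<open>L\<^sub>0\<^sup>n\<^sup>-\<^sup>1 \<partial>L\<^sub>0\<close>.\<close>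

lemma sum_by_parts_recurrences:
  fixes a c u :: "int \<Rightarrow> int \<Rightarrow> 'a::comm_ring_1" and t e0 e1 :: 'a
  assumes a_vanish: "\<And>n m. m < n \<Longrightarrow> a n m = 0"
    and a_rec: "\<And>n m. of_int n * a n m = a (n - 1) (m - 1) - t * a n (m - 1)"
    and c_vanish: "\<And>n k. n < k \<Longrightarrow> c n k = 0"
    and u_vanish: "\<And>n k. n \<le> k \<Longrightarrow> u n k = 0"
    and u_rec: "\<And>n k. u (n + 1) k - t * u n k = e0 * c n k + e1 * c n (k + 1)"
  shows "(\<Sum>n\<in>{k..m}. a n m * (of_int n * u n k))
       = e0 * (\<Sum>n\<in>{k..m - 1}. a n (m - 1) * c n k)
         + e1 * (\<Sum>n\<in>{k + 1..m - 1}. a n (m - 1) * c n (k + 1))"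
proof -
  let ?I = "{k - 1..m - 1}"
  have "a n m * (of_int n * u n k) = a (n - 1) (m - 1) * u n k - t * (a n (m - 1) * u n k)" for n
  proof -
    have "a n m * (of_int n * u n k) = (of_int n * a n m) * u n k"
      by (simp only: mult_ac)
    then show ?thesis
      by (simp only: a_rec left_diff_distrib mult.assoc)
  qed
  then have "(\<Sum>n\<in>{k..m}. a n m * (of_int n * u n k))
      = (\<Sum>n\<in>{k..m}. a (n - 1) (m - 1) * u n k) - t * (\<Sum>n\<in>{k..m}. a n (m - 1) * u n k)"
    by (simp only: sum_subtractf sum_distrib_left)
  also have "(\<Sum>n\<in>{k..m}. a (n - 1) (m - 1) * u n k) = (\<Sum>n\<in>?I. a n (m - 1) * u (n + 1) k)"
    by (rule sum.reindex_bij_witness[where i = "\<lambda>n. n + 1" and j = "\<lambda>n. n - 1"]) auto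
  also have "(\<Sum>n\<in>{k..m}. a n (m - 1) * u n k) = (\<Sum>n\<in>{k - 1..m}. a n (m - 1) * u n k)"
    by (rule sum.mono_neutral_left) (auto simp: u_vanish)
  also have "\<dots> = (\<Sum>n\<in>?I. a n (m - 1) * u n k)"
    by (rule sum.mono_neutral_right) (auto simp: a_vanish)
  also have "(\<Sum>n\<in>?I. a n (m - 1) * u (n + 1) k) - t * (\<Sum>n\<in>?I. a n (m - 1) * u n k)
      = (\<Sum>n\<in>?I. a n (m - 1) * (u (n + 1) k - t * u n k))"
    by (simp only: right_diff_distrib mult.left_commute[of t] sum_subtractf sum_distrib_left)
  also have "\<dots> = e0 * (\<Sum>n\<in>?I. a n (m - 1) * c n k) + e1 * (\<Sum>n\<in>?I. a n (m - 1) * c n (k + 1))"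
    by (simp only: u_rec distrib_left mult.left_commute[of "a _ _"] sum.distrib sum_distrib_left)
  also have "(\<Sum>n\<in>?I. a n (m - 1) * c n k) = (\<Sum>n\<in>{k..m - 1}. a n (m - 1) * c n k)"
    by (rule sum.mono_neutral_right) (auto simp: c_vanish)
  also have "(\<Sum>n\<in>?I. a n (m - 1) * c n (k + 1)) = (\<Sum>n\<in>{k + 1..m - 1}. a n (m - 1) * c n (k + 1))"
    by (rule sum.mono_neutral_right) (auto simp: c_vanish)
  finally show ?thesis .
qed

context K0_derivation
begin

lemma fps_cmap_recipfact: "fps_cmap d (recipfact n) = 0"
proof (cases "0 \<le> n")
  case True
  have "fps_cmap d (tau_fact (nat n)) = 0"
    unfolding tau_fact_def
    by (rule fps_cmap_prod_eq_0) (simp add: fps_cmap_add fps_cmap_mult d_varT)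
  then show ?thesis
    using derivation.d_inverse[OF derivation_fps_cmap recipfact_mult_tau_fact[OF True]] by simp
next
  case False
  then show ?thesis
    by (simp add: recipfact_neg fps_cmap_prod_eq_0 fps_cmap_diff fps_cmap_mult d_varT)
qed

lemma d_zcoeff: "d (zcoeff n m) = 0"
proof -
  have "d (recipfact n $ j) = 0" for j
    using arg_cong[OF fps_cmap_recipfact, of "\<lambda>f. f $ j"] by simp
  then show ?thesis
    by (simp add: zcoeff_eq)
qed

definition dLcoeff :: "int \<Rightarrow> int \<Rightarrow> R" where
  "dLcoeff n k = (Lpow (n - 1) * fls_cmap d L0) $$ (- k)"

lemma d_Lcoeff: "d (Lcoeff n k) = of_int n * dLcoeff n k"
proof -
  have "d (Lcoeff n k) = fls_cmap d (Lpow n) $$ (- k)"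
    by (simp add: Lcoeff_def)
  also have "\<dots> = (fls_const (of_int n) * (Lpow (n - 1) * fls_cmap d L0)) $$ (- k)"
    by (simp only: fls_cmap_Lpow fls_of_int mult.assoc)
  finally show ?thesis
    by (simp add: dLcoeff_def)
qed

lemma dLcoeff_eq_0: "n \<le> k \<Longrightarrow> dLcoeff n k = 0"
  using fls_zero_below_mult[OF fls_zero_below_Lpow[of "n - 1"] fls_zero_below_cmap_L0]
  by (simp add: dLcoeff_def fls_zero_below_def)

lemma dLcoeff_rec: "dLcoeff (n + 1) k - varT * dLcoeff n k = cv * Lcoeff n k + cq * Lcoeff n (k + 1)"
proof -
  have Lpow_n: "Lpow n = Lpow (n - 1) * L0"
    by (rule Lpow_diff_1_mult_L0[symmetric])
  have "Lpow n * fls_cmap d L0 - fls_const varT * (Lpow (n - 1) * fls_cmap d L0)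
      = Lpow (n - 1) * (fls_cmap d L0 * (L0 - fls_const varT))"
    unfolding Lpow_n by (simp only: ring_distribs mult_ac)
  also have "\<dots> = fls_const cv * Lpow n + fls_const cq * (fls_X * Lpow n)"
    unfolding fls_cmap_L0_mult Lpow_n by (simp only: ring_distribs mult_ac)
  finally have "(Lpow n * fls_cmap d L0 - fls_const varT * (Lpow (n - 1) * fls_cmap d L0)) $$ (- k)
      = (fls_const cv * Lpow n + fls_const cq * (fls_X * Lpow n)) $$ (- k)"
    by simp
  then show ?thesis
    by (simp add: dLcoeff_def Lcoeff_def fls_X_times_conv_shift)
qed

lemma fls_cmap_piK:
  "fls_cmap d (piK k) = fls_const cv * (fls_X * piK k) + fls_const cq * (fls_X * piK (k + 1))"
proof (rule fls_eqI)
  fix m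
  have "fls_cmap d (piK k) $$ m = (\<Sum>n\<in>{k..m}. zcoeff n m * (of_int n * dLcoeff n k))"
    by (simp add: piK_nth d_sum d_mult d_zcoeff d_Lcoeff)
  also have "\<dots> = cv * (\<Sum>n\<in>{k..m - 1}. zcoeff n (m - 1) * Lcoeff n k)
      + cq * (\<Sum>n\<in>{k + 1..m - 1}. zcoeff n (m - 1) * Lcoeff n (k + 1))"
    by (rule sum_by_parts_recurrences[where t = varT])
      (simp_all add: zcoeff_eq_0 zcoeff_rec Lcoeff_eq_0 dLcoeff_eq_0 dLcoeff_rec)
  finally show "fls_cmap d (piK k) $$ m
      = (fls_const cv * (fls_X * piK k) + fls_const cq * (fls_X * piK (k + 1))) $$ m"
    by (simp add: fls_X_times_conv_shift piK_nth)
qed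

end

interpretation pderiv: derivation "pderiv :: 'a::idom poly \<Rightarrow> 'a poly"
  by unfold_locales (simp_all add: pderiv_add pderiv_mult algebra_simps)

lemma K0_derivation_dV: "K0_derivation dV 1 0"
  by unfold_locales
    (simp_all add: dV_def pderiv_add pderiv_mult varT_def cR_def varV_def varQ_def pderiv_pCons)

lemma K0_derivation_dQ: "K0_derivation dQ 0 1"
proof unfold_locales
  show "dQ (x + y) = dQ x + dQ y" for x y
    by (rule poly_eqI) (simp add: dQ_def coeff_map_poly pderiv_add)
  show "dQ (x * y) = dQ x * y + x * dQ y" for x y
    by (rule poly_eqI) (simp only: dQ_def coeff_map_poly[where f = pderiv, OF pderiv_0] coeff_add
        coeff_mult pderiv.d_sum pderiv.d_mult sum.distrib)
qed (rule poly_eqI;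
     simp add: dQ_def varT_def cR_def varV_def varQ_def coeff_map_poly coeff_pCons pderiv_pCons
       one_pCons split: nat.split)+

theorem mainTheorem8:
  fixes k :: int
  shows "fls_cmap dV (piK k) = fls_X * piK k \<and> fls_cmap dQ (piK k) = fls_X * piK (k + 1)"
  using K0_derivation.fls_cmap_piK[OF K0_derivation_dV, of k]
    K0_derivation.fls_cmap_piK[OF K0_derivation_dQ, of k]
  by simp

end
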